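(* Let $X \subseteq \mathbb{Z}^n$ be a closed set, $c \in \mathbb{R}^n$, $Q$ an $n\times n$ symmetric positive semidefinite matrix, and $\Omega > 0$. Define $h:\mathbb{R}^n \times \mathbb{R}_+ \to \mathbb{R}\cup\{+\infty\}$ by $h(x,t) = \frac{x'Qx}{t}$ if $t>0$; $h(x,0) = 0$ if $x'Qx = 0$; and $h(x,0) = +\infty$ otherwise. Let $f(t) = \min_{x \in X}\{ c'x + \frac{\Omega}{2}h(x,t) + \frac{\Omega}{2}t\}$ for $t \ge 0$. Then the mean-risk problem and the perspective reformulation are equivalent, i.e., $$\min\left\{c'x + \Omega\sqrt{x'Qx} : x \in X\right\} = \min\{f(t) : t \ge 0\}.$$
   Context: $h$ is the closure of the perspective function of the convex quadratic $q(x)=x'Qx$. The minima appearing (in the definition of $f$ and in both sides of the equality) are assumed to be attained. *)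

theory Defs
  imports "HOL-Analysis.Analysis" "HOL-Library.Extended_Real"
begin

definition qform :: "real^'n^'n \<Rightarrow> real^'n \<Rightarrow> real" where
  "qform Q x = x \<bullet> (Q *v x)"

text \<open>Closure of the perspective function of q, values in R \<union> {+\<infinity>};
  only meaningful for t \<ge> 0.\<close>
definition persp :: "real^'n^'n \<Rightarrow> real^'n \<Rightarrow> real \<Rightarrow> ereal" where
  "persp Q x t = (if t > 0 then ereal (qform Q x / t)
                  else if qform Q x = 0 then 0 else \<infinity>)"

definition persp_obj :: "real^'n \<Rightarrow> real^'n^'n \<Rightarrow> real \<Rightarrow> real^'n \<Rightarrow> real \<Rightarrow> ereal" where
  "persp_obj c Q \<Omega> x t = ereal (c \<bullet> x) + ereal (\<Omega>/2) * persp Q x t + ereal (\<Omega>/2 * t)"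

definition f_persp :: "(real^'n) set \<Rightarrow> real^'n \<Rightarrow> real^'n^'n \<Rightarrow> real \<Rightarrow> real \<Rightarrow> ereal" where
  "f_persp X c Q \<Omega> t = (INF x\<in>X. persp_obj c Q \<Omega> x t)"

definition integral_points :: "(real^'n) set" where
  "integral_points = {x. \<forall>i. x $ i \<in> \<int>}"

end

theory Submission
  imports Defs
begin

text \<open>By AM-GM, \<open>\<Omega> \<surd>q = min\<^sub>t\<^sub>\<ge>\<^sub>0 \<Omega>/2 (q/t + t)\<close>, the minimum being attained at \<open>t = \<surd>q\<close>
  (for \<open>q = 0\<close> this is \<open>t = 0\<close>, where the closure of the perspective takes the value 0).
  So minimising the perspective objective over \<open>t\<close> first yields the mean-risk objective,
  and the theorem follows by interchanging the two infima.\<close>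

lemma two_sqrt_le_div_add:
  fixes q t :: real
  assumes "q \<ge> 0" "t > 0"
  shows "2 * sqrt q \<le> q / t + t"
proof -
  have "0 \<le> (sqrt q - t)^2" by simp
  hence "2 * t * sqrt q \<le> q + t^2"
    using assms by (simp add: power2_eq_square algebra_simps)
  thus ?thesis
    using assms by (simp add: field_simps power2_eq_square)
qed

lemma mean_risk_le_persp_obj:
  assumes q: "qform Q x \<ge> 0" and \<Omega>: "\<Omega> \<ge> 0" and t: "t \<ge> 0"
  shows "ereal (c \<bullet> x + \<Omega> * sqrt (qform Q x)) \<le> persp_obj c Q \<Omega> x t"
proof (cases "t > 0")
  case True
  have "\<Omega>/2 * (2 * sqrt (qform Q x)) \<le> \<Omega>/2 * (qform Q x / t + t)"
    using two_sqrt_le_div_add[OF q True] \<Omega> by (intro mult_left_mono) auto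
  thus ?thesis
    using True unfolding persp_obj_def persp_def by (simp add: distrib_left)
next
  case False
  with t have "t = 0" by simp
  then show ?thesis
    using \<Omega> unfolding persp_obj_def persp_def
    by (cases "\<Omega> = 0") (auto simp: zero_ereal_def)
qed

lemma persp_obj_at_sqrt:
  assumes "qform Q x \<ge> 0"
  shows "persp_obj c Q \<Omega> x (sqrt (qform Q x)) = ereal (c \<bullet> x + \<Omega> * sqrt (qform Q x))"
proof (cases "qform Q x = 0")
  case True
  thus ?thesis unfolding persp_obj_def persp_def by (simp add: zero_ereal_def)
next
  case False
  with assms have q: "qform Q x > 0" by simp
  hence "qform Q x / sqrt (qform Q x) = sqrt (qform Q x)"
    by (simp add: real_div_sqrt)
  thus ?thesis
    using q unfolding persp_obj_def persp_def by simp
qed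

lemma INF_persp_obj_eq_mean_risk:
  assumes "qform Q x \<ge> 0" "\<Omega> \<ge> 0"
  shows "(INF t\<in>{0..}. persp_obj c Q \<Omega> x t) = ereal (c \<bullet> x + \<Omega> * sqrt (qform Q x))"
proof (rule antisym)
  show "(INF t\<in>{0..}. persp_obj c Q \<Omega> x t) \<le> ereal (c \<bullet> x + \<Omega> * sqrt (qform Q x))"
    using INF_lower[of "sqrt (qform Q x)" "{0..}" "persp_obj c Q \<Omega> x"]
      persp_obj_at_sqrt[OF assms(1)] assms(1)
    by simp
  show "ereal (c \<bullet> x + \<Omega> * sqrt (qform Q x)) \<le> (INF t\<in>{0..}. persp_obj c Q \<Omega> x t)"
    using mean_risk_le_persp_obj[OF assms] by (auto intro: INF_greatest)
qed

theorem proposition3: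
  fixes X :: "(real^'n) set" and c :: "real^'n" and Q :: "real^'n^'n" and \<Omega> :: real
  assumes XZ: "X \<subseteq> integral_points" and Xclosed: "closed X"
    and Qsym: "transpose Q = Q"
    and Qpsd: "\<And>x. qform Q x \<ge> 0"
    and \<Omega>pos: "\<Omega> > 0"
    and f_att: "\<And>t. t \<ge> 0 \<Longrightarrow> \<exists>x\<in>X. \<forall>y\<in>X. persp_obj c Q \<Omega> x t \<le> persp_obj c Q \<Omega> y t"
    and lhs_att: "\<exists>x\<in>X. \<forall>y\<in>X. c \<bullet> x + \<Omega> * sqrt (qform Q x) \<le> c \<bullet> y + \<Omega> * sqrt (qform Q y)"
    and rhs_att: "\<exists>t\<ge>0. \<forall>s\<ge>0. f_persp X c Q \<Omega> t \<le> f_persp X c Q \<Omega> s"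
  shows "(INF x\<in>X. ereal (c \<bullet> x + \<Omega> * sqrt (qform Q x)))
         = (INF t\<in>{0..}. f_persp X c Q \<Omega> t)"
proof -
  have "(INF t\<in>{0..}. f_persp X c Q \<Omega> t) = (INF t\<in>{0..}. INF x\<in>X. persp_obj c Q \<Omega> x t)"
    unfolding f_persp_def ..
  also have "\<dots> = (INF x\<in>X. INF t\<in>{0..}. persp_obj c Q \<Omega> x t)"
    by (rule INF_commute)
  also have "\<dots> = (INF x\<in>X. ereal (c \<bullet> x + \<Omega> * sqrt (qform Q x)))"
    using INF_persp_obj_eq_mean_risk[OF Qpsd] \<Omega>pos by simp
  finally show ?thesis ..
qed

end
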